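(* Let $\mathcal H=\mathbb C^2$ with orthonormal basis $\{|0\rangle,|1\rangle\}$ and let $E_i=\tfrac12|\varphi_i\rangle\langle\varphi_i|$, $i=1,\dots,4$, where $|\varphi_1\rangle=|0\rangle$ and $|\varphi_{j}\rangle=\tfrac1{\sqrt3}|0\rangle+\sqrt{\tfrac23}e^{2\pi i (j-2)/3}|1\rangle$ for $j=2,3,4$ (the qubit SIC-POVM). Let $\mathcal T=\mathcal S(\mathbb C^2)$ be all qubit states and $\mathcal A$ the single POVM $\{E_i\}_{i=1}^4$. Then $(\mathcal T,\mathcal A,\mathcal A)$ is not broadcastable, but for every $n\in\mathbb N$ the map $\Xi_n(\rho)=\sum_{i=1}^4\mathrm{tr}[E_i\rho]\,(3|\varphi_i\rangle\langle\varphi_i|-I)^{\otimes n}$ is a trace-preserving linear map satisfying $\mathrm{tr}[(E_{i_1}\otimes\cdots\otimes E_{i_n})\Xi_n(\rho)]\ge0$ for all $i_1,\dots,i_n$ and all states $\rho$, and $\mathrm{tr}[E_{j}\,\mathrm{tr}_{k^c}\Xi_n(\rho)]=\mathrm{tr}[E_j\rho]$ for all $j$, all $k\in\{1,\dots,n\}$ and all states $\rho$; i.e. the scenario is $1\to n$-pseudo-broadcastable for all $n$.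
   Context: $(\mathcal T,\mathcal A,\mathcal A)$ is broadcastable if there is a completely positive trace-preserving map $\Lambda:\mathcal L(\mathcal H)\to\mathcal L(\mathcal H\otimes\mathcal H)$ such that $\mathrm{tr}[A_k\mathrm{tr}_2\Lambda(\rho)]=\mathrm{tr}[A_k\rho]=\mathrm{tr}[A_k\mathrm{tr}_1\Lambda(\rho)]$ for all $\{A_k\}\in\mathcal A$, $\rho\in\mathcal T$, $k$. $\mathrm{tr}_{k^c}$ denotes the partial trace over all tensor factors except the $k$-th. *)

theory Defs
  imports "Jordan_Normal_Form.Matrix" "Jordan_Normal_Form.Conjugate"
begin

(* Operators on C^d are complex d x d matrices (Jordan_Normal_Form).
   Tensor factors are ordered so that the first factor carries the most
   significant index digit (standard Kronecker convention). *)

definition mtrace :: "complex mat \<Rightarrow> complex" where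
  "mtrace A = (\<Sum>i<dim_row A. A $$ (i, i))"

(* positive semidefinite: <v, A v> >= 0 (real, non-negative; complex order) *)
definition psd :: "nat \<Rightarrow> complex mat \<Rightarrow> bool" where
  "psd d A \<longleftrightarrow> A \<in> carrier_mat d d \<and> (\<forall>v \<in> carrier_vec d. 0 \<le> (A *\<^sub>v v) \<bullet> conjugate v)"

definition states :: "nat \<Rightarrow> complex mat set" where
  "states d = {\<rho>. psd d \<rho> \<and> mtrace \<rho> = 1}"

definition kron :: "complex mat \<Rightarrow> complex mat \<Rightarrow> complex mat" where
  "kron A B = mat (dim_row A * dim_row B) (dim_col A * dim_col B)
     (\<lambda>(i, j). A $$ (i div dim_row B, j div dim_col B) * B $$ (i mod dim_row B, j mod dim_col B))"

definition kron_list :: "complex mat list \<Rightarrow> complex mat" where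
  "kron_list As = foldr kron As (1\<^sub>m 1)"

definition kron_pow :: "complex mat \<Rightarrow> nat \<Rightarrow> complex mat" where
  "kron_pow A n = kron_list (replicate n A)"

definition ketbra :: "complex vec \<Rightarrow> complex mat" where
  "ketbra v = mat (dim_vec v) (dim_vec v) (\<lambda>(a, b). v $ a * cnj (v $ b))"

definition lin_map :: "nat \<Rightarrow> nat \<Rightarrow> (complex mat \<Rightarrow> complex mat) \<Rightarrow> bool" where
  "lin_map d d' \<Lambda> \<longleftrightarrow>
     (\<forall>A \<in> carrier_mat d d. \<Lambda> A \<in> carrier_mat d' d') \<and>
     (\<forall>A \<in> carrier_mat d d. \<forall>B \<in> carrier_mat d d. \<Lambda> (A + B) = \<Lambda> A + \<Lambda> B) \<and>
     (\<forall>A \<in> carrier_mat d d. \<forall>c. \<Lambda> (c \<cdot>\<^sub>m A) = c \<cdot>\<^sub>m \<Lambda> A)"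

definition trace_preserving :: "nat \<Rightarrow> (complex mat \<Rightarrow> complex mat) \<Rightarrow> bool" where
  "trace_preserving d \<Lambda> \<longleftrightarrow> (\<forall>A \<in> carrier_mat d d. mtrace (\<Lambda> A) = mtrace A)"

(* id_m \<otimes> \<Lambda>, applied blockwise to an (m*d) x (m*d) matrix (ancilla C^m first) *)
definition id_tensor :: "nat \<Rightarrow> nat \<Rightarrow> nat \<Rightarrow> (complex mat \<Rightarrow> complex mat) \<Rightarrow> complex mat \<Rightarrow> complex mat" where
  "id_tensor m d d' \<Lambda> X = mat (m * d') (m * d')
     (\<lambda>(i, j). \<Lambda> (mat d d (\<lambda>(a, b). X $$ ((i div d') * d + a, (j div d') * d + b))) $$ (i mod d', j mod d'))"

definition completely_positive :: "nat \<Rightarrow> nat \<Rightarrow> (complex mat \<Rightarrow> complex mat) \<Rightarrow> bool" where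
  "completely_positive d d' \<Lambda> \<longleftrightarrow>
     (\<forall>m \<ge> 1. \<forall>X. psd (m * d) X \<longrightarrow> psd (m * d') (id_tensor m d d' \<Lambda> X))"

definition cptp :: "nat \<Rightarrow> nat \<Rightarrow> (complex mat \<Rightarrow> complex mat) \<Rightarrow> bool" where
  "cptp d d' \<Lambda> \<longleftrightarrow> lin_map d d' \<Lambda> \<and> completely_positive d d' \<Lambda> \<and> trace_preserving d \<Lambda>"

(* partial traces on C^d \<otimes> C^d: tr_2 keeps factor 1, tr_1 keeps factor 2 *)
definition ptrace2 :: "nat \<Rightarrow> complex mat \<Rightarrow> complex mat" where
  "ptrace2 d X = mat d d (\<lambda>(a, b). \<Sum>c<d. X $$ (a * d + c, b * d + c))"

definition ptrace1 :: "nat \<Rightarrow> complex mat \<Rightarrow> complex mat" where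
  "ptrace1 d X = mat d d (\<lambda>(a, b). \<Sum>c<d. X $$ (c * d + a, c * d + b))"

(* POVMs are finite lists of effects; (T, A, A) broadcastable on C^d *)
definition broadcastable :: "nat \<Rightarrow> complex mat set \<Rightarrow> complex mat list set \<Rightarrow> bool" where
  "broadcastable d T \<A> \<longleftrightarrow> (\<exists>\<Lambda>. cptp d (d * d) \<Lambda> \<and>
     (\<forall>As \<in> \<A>. \<forall>\<rho> \<in> T. \<forall>k < length As.
        mtrace (As ! k * ptrace2 d (\<Lambda> \<rho>)) = mtrace (As ! k * \<rho>) \<and>
        mtrace (As ! k * ptrace1 d (\<Lambda> \<rho>)) = mtrace (As ! k * \<rho>)))"

(* partial trace over all qubit factors except the k-th (1 <= k <= n) of an
   operator on (C^2)^{\<otimes> n}; result is a 2 x 2 matrix.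
   qins n k a r inserts the bit a at factor position k into the index r of
   the remaining n-1 factors. *)
definition qins :: "nat \<Rightarrow> nat \<Rightarrow> nat \<Rightarrow> nat \<Rightarrow> nat" where
  "qins n k a r = (r div 2 ^ (n - k)) * 2 ^ (n - k + 1) + a * 2 ^ (n - k) + r mod 2 ^ (n - k)"

definition ptrace_keep :: "nat \<Rightarrow> nat \<Rightarrow> complex mat \<Rightarrow> complex mat" where
  "ptrace_keep n k X = mat 2 2 (\<lambda>(a, b). \<Sum>r<2 ^ (n - 1). X $$ (qins n k a r, qins n k b r))"

definition sic_phi :: "nat \<Rightarrow> complex vec" where
  "sic_phi j = (if j = 1 then vec 2 (\<lambda>a. if a = 0 then 1 else 0)
     else vec 2 (\<lambda>a. if a = 0 then complex_of_real (1 / sqrt 3)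
       else complex_of_real (sqrt (2 / 3)) * cis (2 * pi * real (j - 2) / 3)))"

definition sic_E :: "nat \<Rightarrow> complex mat" where
  "sic_E i = (1 / 2 :: complex) \<cdot>\<^sub>m ketbra (sic_phi i)"

definition Xi :: "nat \<Rightarrow> complex mat \<Rightarrow> complex mat" where
  "Xi n \<rho> = mat (2 ^ n) (2 ^ n) (\<lambda>(r, c).
     \<Sum>i\<in>{1..4::nat}. mtrace (sic_E i * \<rho>) * kron_pow (3 \<cdot>\<^sub>m ketbra (sic_phi i) - 1\<^sub>m 2) n $$ (r, c))"

end

theory Submission
  imports Defs
begin

text \<open>
  The four SIC effects are informationally complete, so a broadcasting
  channel \<open>\<Lambda>\<close> must reproduce every qubit state \<open>\<rho>\<close> exactly as both marginals of \<open>\<Lambda> \<rho>\<close>.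
  Positivity then pins down \<open>\<langle>-+|\<Lambda> \<rho>|-+\<rangle>\<close>: it is \<open>1/4\<close> for \<open>\<rho> = |0\<rangle>\<langle>0|\<close> and
  \<open>\<rho> = |1\<rangle>\<langle>1|\<close> (where \<open>\<Lambda> \<rho>\<close> must be \<open>|00\<rangle>\<langle>00|\<close>, resp. \<open>|11\<rangle>\<langle>11|\<close>), but \<open>0\<close> for
  \<open>\<rho> = |+\<rangle>\<langle>+|\<close> (first marginal) and \<open>\<rho> = |-\<rangle>\<langle>-|\<close> (second marginal). As
  \<open>|0\<rangle>\<langle>0| + |1\<rangle>\<langle>1| = |+\<rangle>\<langle>+| + |-\<rangle>\<langle>-|\<close>, this contradicts linearity.

  The operators \<open>B\<^sub>i = 3|\<phi>\<^sub>i\<rangle>\<langle>\<phi>\<^sub>i| - I\<close> form the frame dual to the SIC: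
  \<open>tr[E\<^sub>j B\<^sub>i] = \<delta>\<^sub>i\<^sub>j\<close> (from \<open>|\<langle>\<phi>\<^sub>i|\<phi>\<^sub>j\<rangle>|\<^sup>2 = 1/3\<close> for \<open>i \<noteq> j\<close>) and \<open>tr B\<^sub>i = 1\<close>. Hence
  \<open>tr[(E\<^sub>i\<^sub>1 \<otimes> \<dots> \<otimes> E\<^sub>i\<^sub>n) \<Xi>\<^sub>n(\<rho>)] = \<Sum>\<^sub>i tr[E\<^sub>i \<rho>] \<Prod>\<^sub>k \<delta>\<^sub>i\<^sub>k\<^sub>i \<ge> 0\<close>, every single-site
  marginal of \<open>\<Xi>\<^sub>n(\<rho>)\<close> is \<open>\<Sum>\<^sub>i tr[E\<^sub>i \<rho>] B\<^sub>i\<close>, which has the SIC statistics of \<open>\<rho>\<close>,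
  and trace preservation follows from \<open>\<Sum>\<^sub>i E\<^sub>i = I\<close>.
\<close>

section \<open>Kronecker products\<close>

lemma sum_lessThan_mult_split: "(\<Sum>r<(m::nat) * n. f r) = (\<Sum>a<m. \<Sum>b<n. f (a * n + b))"
proof (induction m)
  case 0 then show ?case by simp
next
  case (Suc m)
  have "{..<Suc m * n} = {..<m * n} \<union> {m * n..<m * n + n}" by auto
  then have "(\<Sum>r<Suc m * n. f r) = (\<Sum>r<m * n. f r) + (\<Sum>r\<in>{m * n..<m * n + n}. f r)"
    by (simp add: sum.union_disjoint ivl_disj_int)
  also have "(\<Sum>r\<in>{m * n..<m * n + n}. f r) = (\<Sum>b<n. f (m * n + b))"
    using sum.shift_bounds_nat_ivl[of f 0 "m * n" n] by (simp add: atLeast0LessThan add.commute)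
  finally show ?case using Suc by simp
qed

lemma mixed_radix_less: "a < (m::nat) \<Longrightarrow> c < n \<Longrightarrow> a * n + c < m * n"
proof -
  assume "a < m" "c < n"
  then have "a * n + c < Suc a * n" by simp
  also have "\<dots> \<le> m * n" using \<open>a < m\<close> by (intro mult_le_mono1) simp
  finally show ?thesis .
qed

lemma dim_kron [simp]:
  "dim_row (kron A B) = dim_row A * dim_row B" "dim_col (kron A B) = dim_col A * dim_col B"
  by (auto simp: kron_def)

lemma kron_carrier: "kron A B \<in> carrier_mat (dim_row A * dim_row B) (dim_col A * dim_col B)"
  by (auto simp: kron_def)

lemma index_kron:
  "i < dim_row A * dim_row B \<Longrightarrow> j < dim_col A * dim_col B \<Longrightarrow>
   kron A B $$ (i, j) = A $$ (i div dim_row B, j div dim_col B) * B $$ (i mod dim_row B, j mod dim_col B)"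
  by (auto simp: kron_def)

lemma index_kron_mixed_radix:
  assumes "a < dim_row A" "c < dim_row B" "b < dim_col A" "d < dim_col B"
  shows "kron A B $$ (a * dim_row B + c, b * dim_col B + d) = A $$ (a, b) * B $$ (c, d)"
proof -
  have "a * dim_row B + c < dim_row A * dim_row B" "b * dim_col B + d < dim_col A * dim_col B"
    using mixed_radix_less assms by blast+
  from index_kron[OF this] show ?thesis using assms by simp
qed

lemma kron_mult_kron:
  assumes A: "A \<in> carrier_mat n1 m1" and C: "C \<in> carrier_mat m1 k1"
    and B: "B \<in> carrier_mat n2 m2" and D: "D \<in> carrier_mat m2 k2"
  shows "kron A B * kron C D = kron (A * C) (B * D)"
proof (rule eq_matI)
  show "dim_row (kron A B * kron C D) = dim_row (kron (A * C) (B * D))"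
    "dim_col (kron A B * kron C D) = dim_col (kron (A * C) (B * D))" using A B C D by simp_all
  fix i j assume "i < dim_row (kron (A * C) (B * D))" and "j < dim_col (kron (A * C) (B * D))"
  then have i: "i < n1 * n2" and j: "j < k1 * k2" using A B C D by auto
  then have "n2 > 0" "k2 > 0" by (auto intro!: gr0I)
  then have i1: "i div n2 < n1" and j1: "j div k2 < k1"
    using i j by (simp_all add: less_mult_imp_div_less)
  have "(kron A B * kron C D) $$ (i, j) = (\<Sum>r<m1 * m2. kron A B $$ (i, r) * kron C D $$ (r, j))"
    using i j A B C D by (simp add: scalar_prod_def times_mat_def atLeast0LessThan kron_def)
  also have "\<dots> = (\<Sum>a<m1. \<Sum>b<m2. kron A B $$ (i, a * m2 + b) * kron C D $$ (a * m2 + b, j))"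
    by (rule sum_lessThan_mult_split)
  also have "\<dots> = (\<Sum>a<m1. \<Sum>b<m2. (A $$ (i div n2, a) * C $$ (a, j div k2)) *
                                      (B $$ (i mod n2, b) * D $$ (b, j mod k2)))"
  proof (intro sum.cong refl)
    fix a b assume a: "a \<in> {..<m1}" and b: "b \<in> {..<m2}"
    then have "a * m2 + b < m1 * m2" using mixed_radix_less by auto
    then show "kron A B $$ (i, a * m2 + b) * kron C D $$ (a * m2 + b, j) =
        (A $$ (i div n2, a) * C $$ (a, j div k2)) * (B $$ (i mod n2, b) * D $$ (b, j mod k2))"
      using index_kron[of i A B "a * m2 + b"] index_kron[of "a * m2 + b" C D j] i j A B C D b
      by (simp add: algebra_simps)
  qed
  also have "\<dots> = (A * C) $$ (i div n2, j div k2) * (B * D) $$ (i mod n2, j mod k2)"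
    using A B C D i1 j1 \<open>n2 > 0\<close> \<open>k2 > 0\<close>
    by (simp add: sum_product scalar_prod_def times_mat_def atLeast0LessThan)
  also have "\<dots> = kron (A * C) (B * D) $$ (i, j)"
    using index_kron[of i "A * C" "B * D" j] i j A B C D by simp
  finally show "(kron A B * kron C D) $$ (i, j) = kron (A * C) (B * D) $$ (i, j)" .
qed

lemma mtrace_kron:
  assumes A: "A \<in> carrier_mat n1 n1" and B: "B \<in> carrier_mat n2 n2"
  shows "mtrace (kron A B) = mtrace A * mtrace B"
proof -
  have "mtrace (kron A B) = (\<Sum>i<n1 * n2. kron A B $$ (i, i))" using A B by (simp add: mtrace_def)
  also have "\<dots> = (\<Sum>a<n1. \<Sum>b<n2. A $$ (a, a) * B $$ (b, b))"
    unfolding sum_lessThan_mult_split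
    using index_kron_mixed_radix[of _ A _ B] A B by (intro sum.cong refl) auto
  also have "\<dots> = mtrace A * mtrace B" using A B by (simp add: mtrace_def sum_product)
  finally show ?thesis .
qed

lemma kron_assoc:
  assumes A: "A \<in> carrier_mat rA cA" and B: "B \<in> carrier_mat rB cB" and C: "C \<in> carrier_mat rC cC"
  shows "kron (kron A B) C = kron A (kron B C)"
proof (rule eq_matI)
  show "dim_row (kron (kron A B) C) = dim_row (kron A (kron B C))"
    "dim_col (kron (kron A B) C) = dim_col (kron A (kron B C))" by simp_all
  fix i j assume "i < dim_row (kron A (kron B C))" and "j < dim_col (kron A (kron B C))"
  then have i: "i < rA * rB * rC" and j: "j < cA * cB * cC" using A B C by (auto simp: mult.assoc)
  then have "rC > 0" "cC > 0" by (auto intro!: gr0I)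
  then have e1: "i div rC < rA * rB" and e2: "j div cC < cA * cB"
    using i j by (simp_all add: less_mult_imp_div_less)
  have m1: "i mod (rB * rC) div rC = i div rC mod rB" and m2: "j mod (cB * cC) div cC = j div cC mod cB"
    using mod_mult2_eq[of i rC rB] mod_mult2_eq[of j cC cB] \<open>rC > 0\<close> \<open>cC > 0\<close>
    by (simp_all add: mult.commute)
  have i3: "i mod (rB * rC) < rB * rC" and j3: "j mod (cB * cC) < cB * cC"
    using i j by (metis mod_less_divisor mult_eq_0_iff neq0_conv mult_0_right less_nat_zero_code)+
  have m5: "i div rB div rC = i div rC div rB" and m6: "j div cB div cC = j div cC div cB"
    by (metis div_mult2_eq mult.commute)+
  show "kron (kron A B) C $$ (i, j) = kron A (kron B C) $$ (i, j)"
    using index_kron[of i "kron A B" C j] index_kron[of i A "kron B C" j]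
      index_kron[of "i div rC" A B "j div cC"] index_kron[of "i mod (rB * rC)" B C "j mod (cB * cC)"]
      i j e1 e2 i3 j3 A B C
    by (simp add: m1 m2 m5 m6 mod_mod_cancel div_mult2_eq mult.assoc
        mult.commute[of rC rB] mult.commute[of cC cB])
qed

lemma kron_one_left: "kron (1\<^sub>m 1) M = M"
  by (rule eq_matI) (auto simp: kron_def)

lemma kron_list_Nil [simp]: "kron_list [] = 1\<^sub>m 1"
  and kron_list_Cons [simp]: "kron_list (A # As) = kron A (kron_list As)"
  by (simp_all add: kron_list_def)

lemma kron_list_carrier:
  "set As \<subseteq> carrier_mat d d \<Longrightarrow> kron_list As \<in> carrier_mat (d ^ length As) (d ^ length As)"
proof (induction As)
  case (Cons A As)
  then show ?case using kron_carrier[of A "kron_list As"] by auto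
qed simp

lemma kron_list_append:
  "set As \<subseteq> carrier_mat d d \<Longrightarrow> set Bs \<subseteq> carrier_mat d d \<Longrightarrow>
   kron_list (As @ Bs) = kron (kron_list As) (kron_list Bs)"
proof (induction As)
  case Nil then show ?case using kron_one_left by simp
next
  case (Cons A As)
  then have "kron_list ((A # As) @ Bs) = kron A (kron (kron_list As) (kron_list Bs))" by simp
  also have "\<dots> = kron (kron A (kron_list As)) (kron_list Bs)"
    using Cons.prems kron_list_carrier[of As d] kron_list_carrier[of Bs d]
    by (intro kron_assoc[symmetric]) auto
  finally show ?case by simp
qed

lemma mtrace_kron_list_mult:
  "length As = length Bs \<Longrightarrow> set As \<subseteq> carrier_mat d d \<Longrightarrow> set Bs \<subseteq> carrier_mat d d \<Longrightarrow>
   mtrace (kron_list As * kron_list Bs) = (\<Prod>k<length As. mtrace (As ! k * Bs ! k))"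
proof (induction As arbitrary: Bs)
  case Nil then show ?case by (simp add: mtrace_def)
next
  case (Cons A As)
  then obtain B Bs' where Bs: "Bs = B # Bs'" by (cases Bs) auto
  define N where "N = d ^ length As"
  have A: "A \<in> carrier_mat d d" and B: "B \<in> carrier_mat d d" using Cons.prems Bs by auto
  have cA: "kron_list As \<in> carrier_mat N N" and cB: "kron_list Bs' \<in> carrier_mat N N"
    using Cons.prems Bs kron_list_carrier[of As d] kron_list_carrier[of Bs' d] by (auto simp: N_def)
  have "mtrace (kron_list (A # As) * kron_list Bs) = mtrace (kron (A * B) (kron_list As * kron_list Bs'))"
    using kron_mult_kron[OF A B cA cB] Bs by simp
  also have "\<dots> = mtrace (A * B) * mtrace (kron_list As * kron_list Bs')"
    using A B cA cB by (intro mtrace_kron[of _ d _ N]) auto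
  also have "\<dots> = (\<Prod>k<length (A # As). mtrace ((A # As) ! k * Bs ! k))"
    using Cons.IH[of Bs'] Cons.prems Bs by (simp add: prod.lessThan_Suc_shift del: prod.lessThan_Suc)
  finally show ?case .
qed

lemma kron_pow_carrier: "B \<in> carrier_mat d d \<Longrightarrow> kron_pow B n \<in> carrier_mat (d ^ n) (d ^ n)"
proof -
  assume "B \<in> carrier_mat d d"
  then have "set (replicate n B) \<subseteq> carrier_mat d d" by auto
  from kron_list_carrier[OF this] show ?thesis by (simp add: kron_pow_def)
qed

lemma kron_pow_Suc: "kron_pow B (Suc n) = kron B (kron_pow B n)"
  by (simp add: kron_pow_def)

lemma mtrace_kron_pow: "B \<in> carrier_mat d d \<Longrightarrow> mtrace (kron_pow B n) = mtrace B ^ n"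
proof (induction n)
  case 0 then show ?case by (simp add: kron_pow_def mtrace_def)
next
  case (Suc n)
  then show ?case using mtrace_kron[of B d "kron_pow B n" "d ^ n"] kron_pow_carrier[of B d n]
    by (simp add: kron_pow_Suc)
qed

lemma kron_pow_split:
  assumes "B \<in> carrier_mat d d"
  shows "kron_pow B (p + Suc m) = kron (kron_pow B p) (kron B (kron_pow B m))"
proof -
  have "replicate (p + Suc m) B = replicate p B @ (B # replicate m B)"
    by (simp add: replicate_add replicate_append_same)
  moreover have "set (replicate p B) \<subseteq> carrier_mat d d" "set (B # replicate m B) \<subseteq> carrier_mat d d"
    using assms by auto
  ultimately show ?thesis using kron_list_append by (simp add: kron_pow_def)
qed

lemma qins_less:
  assumes k: "1 \<le> k" "k \<le> n" and a: "a < 2" and r: "r < 2 ^ (n - 1)"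
  shows "qins n k a r < 2 ^ n"
proof -
  define m where "m = n - k"
  have n1: "2 ^ (n - 1) = (2::nat) ^ (k - 1) * 2 ^ m" and n2: "(2::nat) ^ n = 2 ^ (k - 1) * (2 * 2 ^ m)"
    using k by (simp_all add: m_def flip: power_add power_Suc)
  have r1: "r div 2 ^ m < 2 ^ (k - 1)" using r n1 by (simp add: less_mult_imp_div_less)
  have r2: "a * 2 ^ m + r mod 2 ^ m < 2 * 2 ^ m" using mixed_radix_less[of a 2 "r mod 2 ^ m" "2 ^ m"] a by simp
  have "qins n k a r = (r div 2 ^ m) * (2 * 2 ^ m) + (a * 2 ^ m + r mod 2 ^ m)"
    by (simp add: qins_def m_def[symmetric] algebra_simps)
  also have "\<dots> < 2 ^ (k - 1) * (2 * 2 ^ m)" by (rule mixed_radix_less[OF r1 r2])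
  finally show ?thesis using n2 by simp
qed

lemma index_kron_pow_qins:
  assumes B: "B \<in> carrier_mat 2 2" and n: "n = p + Suc m" and k: "k = Suc p"
    and a: "a < 2" and b: "b < 2" and r1: "r1 < 2 ^ p" and r2: "r2 < 2 ^ m"
  shows "kron_pow B n $$ (qins n k a (r1 * 2 ^ m + r2), qins n k b (r1 * 2 ^ m + r2)) =
    kron_pow B p $$ (r1, r1) * (B $$ (a, b) * kron_pow B m $$ (r2, r2))"
proof -
  define P where "P = kron_pow B p"
  define Q where "Q = kron_pow B m"
  have P: "P \<in> carrier_mat (2 ^ p) (2 ^ p)" and Q: "Q \<in> carrier_mat (2 ^ m) (2 ^ m)"
    unfolding P_def Q_def using B by (simp_all add: kron_pow_carrier)
  have BQ: "kron B Q \<in> carrier_mat (2 * 2 ^ m) (2 * 2 ^ m)" using kron_carrier[of B Q] B Q by simp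
  have q: "qins n k c (r1 * 2 ^ m + r2) = r1 * (2 * 2 ^ m) + (c * 2 ^ m + r2)" for c
    unfolding qins_def n k using r2 by (simp add: algebra_simps)
  have "a * 2 ^ m + r2 < 2 * 2 ^ m" "b * 2 ^ m + r2 < 2 * 2 ^ m"
    using mixed_radix_less[of _ 2 r2 "2 ^ m"] a b r2 by simp_all
  then show ?thesis
    unfolding q unfolding n kron_pow_split[OF B] P_def[symmetric] Q_def[symmetric]
    using index_kron_mixed_radix[of r1 P "a * 2 ^ m + r2" "kron B Q" r1 "b * 2 ^ m + r2"]
      index_kron_mixed_radix[of a B r2 Q b r2] B P Q BQ r1 r2 a b
    by simp
qed

lemma ptrace_keep_kron_pow:
  assumes B: "B \<in> carrier_mat 2 2" and k: "1 \<le> k" "k \<le> n"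
  shows "ptrace_keep n k (kron_pow B n) = mtrace B ^ (n - 1) \<cdot>\<^sub>m B"
proof (rule eq_matI)
  fix a b assume "a < dim_row (mtrace B ^ (n - 1) \<cdot>\<^sub>m B)" "b < dim_col (mtrace B ^ (n - 1) \<cdot>\<^sub>m B)"
  then have a: "a < 2" and b: "b < 2" using B by auto
  obtain p where p: "k = Suc p" using k by (cases k) auto
  define m where "m = n - k"
  have m: "n = p + Suc m" using k p by (simp add: m_def)
  have trP: "mtrace (kron_pow B p) = (\<Sum>r1<2 ^ p. kron_pow B p $$ (r1, r1))"
    and trQ: "mtrace (kron_pow B m) = (\<Sum>r2<2 ^ m. kron_pow B m $$ (r2, r2))"
    by (simp_all add: mtrace_def carrier_matD[OF kron_pow_carrier[OF B]])
  have "ptrace_keep n k (kron_pow B n) $$ (a, b) =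
      (\<Sum>r1<2 ^ p. \<Sum>r2<2 ^ m. kron_pow B n $$ (qins n k a (r1 * 2 ^ m + r2), qins n k b (r1 * 2 ^ m + r2)))"
    using a b m unfolding ptrace_keep_def by (simp add: power_add sum_lessThan_mult_split)
  also have "\<dots> = (\<Sum>r1<2 ^ p. \<Sum>r2<2 ^ m. kron_pow B p $$ (r1, r1) * (B $$ (a, b) * kron_pow B m $$ (r2, r2)))"
    using index_kron_pow_qins[OF B m p a b] by (intro sum.cong refl) simp
  also have "\<dots> = B $$ (a, b) * (mtrace (kron_pow B p) * mtrace (kron_pow B m))"
    unfolding trP trQ sum_product by (simp add: sum_distrib_left mult.left_commute)
  also have "\<dots> = (mtrace B ^ (n - 1) \<cdot>\<^sub>m B) $$ (a, b)"
    using mtrace_kron_pow[OF B] m a b B by (simp add: power_add)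
  finally show "ptrace_keep n k (kron_pow B n) $$ (a, b) = (mtrace B ^ (n - 1) \<cdot>\<^sub>m B) $$ (a, b)" .
qed (use B in \<open>simp_all add: ptrace_keep_def\<close>)

section \<open>Traces and positive semidefinite matrices\<close>

lemma mtrace_mult_eq_sum:
  "A \<in> carrier_mat N N \<Longrightarrow> M \<in> carrier_mat N N \<Longrightarrow>
   mtrace (A * M) = (\<Sum>r<N. \<Sum>s<N. A $$ (r, s) * M $$ (s, r))"
  by (simp add: mtrace_def times_mat_def scalar_prod_def atLeast0LessThan)

lemma mtrace_mult_lin_comb:
  assumes A: "A \<in> carrier_mat N N" and K: "\<And>i. i \<in> I \<Longrightarrow> K i \<in> carrier_mat N N"
  shows "mtrace (A * mat N N (\<lambda>(r, c). \<Sum>i\<in>I. g i * K i $$ (r, c))) = (\<Sum>i\<in>I. g i * mtrace (A * K i))"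
proof -
  have "mtrace (A * mat N N (\<lambda>(r, c). \<Sum>i\<in>I. g i * K i $$ (r, c))) =
      (\<Sum>r<N. \<Sum>s<N. A $$ (r, s) * (\<Sum>i\<in>I. g i * K i $$ (s, r)))"
    using A by (subst mtrace_mult_eq_sum[of _ N]) auto
  also have "\<dots> = (\<Sum>i\<in>I. g i * (\<Sum>r<N. \<Sum>s<N. A $$ (r, s) * K i $$ (s, r)))"
    by (simp add: sum_distrib_left sum_distrib_right mult_ac sum.swap[of _ I])
  also have "\<dots> = (\<Sum>i\<in>I. g i * mtrace (A * K i))"
    using A K by (intro sum.cong refl) (simp add: mtrace_mult_eq_sum[of _ N])
  finally show ?thesis .
qed

lemma mtrace_mult_add_right:
  "E \<in> carrier_mat N N \<Longrightarrow> A \<in> carrier_mat N N \<Longrightarrow> B \<in> carrier_mat N N \<Longrightarrow>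
   mtrace (E * (A + B)) = mtrace (E * A) + mtrace (E * B)"
  by (simp add: mult_add_distrib_mat mtrace_def sum.distrib)

lemma mtrace_mult_smult_right:
  "E \<in> carrier_mat N N \<Longrightarrow> A \<in> carrier_mat N N \<Longrightarrow> mtrace (E * (c \<cdot>\<^sub>m A)) = c * mtrace (E * A)"
  by (simp add: mult_smult_distrib[of E N N A N] mtrace_def sum_distrib_left)

lemma mtrace_mult_2x2:
  "M \<in> carrier_mat 2 2 \<Longrightarrow> N \<in> carrier_mat 2 2 \<Longrightarrow>
   mtrace (M * N) = M $$ (0, 0) * N $$ (0, 0) + M $$ (0, 1) * N $$ (1, 0) + M $$ (1, 0) * N $$ (0, 1)
     + M $$ (1, 1) * N $$ (1, 1)"
  by (simp add: mtrace_def times_mat_def scalar_prod_def numeral_2_eq_2 lessThan_Suc atLeast0LessThan)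

lemma mtrace_2x2: "M \<in> carrier_mat 2 2 \<Longrightarrow> mtrace M = M $$ (0, 0) + M $$ (1, 1)"
  by (simp add: mtrace_def numeral_2_eq_2)

lemma prod_nonneg_complex: "(\<And>k. k < (n::nat) \<Longrightarrow> 0 \<le> f k) \<Longrightarrow> 0 \<le> (\<Prod>k<n. f k :: complex)"
  by (induction n) (simp add: less_eq_complex_def, simp add: mult_nonneg_nonneg)

lemma psd_carrier: "psd d A \<Longrightarrow> A \<in> carrier_mat d d"
  unfolding psd_def by (rule conjunct1)

lemma psd_quad_form_nonneg: "psd d A \<Longrightarrow> v \<in> carrier_vec d \<Longrightarrow> 0 \<le> (A *\<^sub>v v) \<bullet> conjugate v"
  unfolding psd_def by blast

lemma state_psd: "\<rho> \<in> states d \<Longrightarrow> psd d \<rho>"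
  unfolding states_def by simp

lemma state_carrier: "\<rho> \<in> states d \<Longrightarrow> \<rho> \<in> carrier_mat d d"
  by (intro psd_carrier state_psd)

lemma quad_form_2x2:
  "dim_vec p = 2 \<Longrightarrow> R \<in> carrier_mat 2 2 \<Longrightarrow> (R *\<^sub>v p) \<bullet> conjugate p =
   R $$ (0, 0) * p $ 0 * cnj (p $ 0) + R $$ (0, 1) * p $ 1 * cnj (p $ 0)
     + R $$ (1, 0) * p $ 0 * cnj (p $ 1) + R $$ (1, 1) * p $ 1 * cnj (p $ 1)"
  by (simp add: scalar_prod_def mult_mat_vec_def numeral_2_eq_2 atLeast0LessThan lessThan_Suc distrib_right)

lemma psd_2I:
  assumes R: "R \<in> carrier_mat 2 2"
    and nonneg: "\<And>p0 p1. 0 \<le> R $$ (0, 0) * p0 * cnj p0 + R $$ (0, 1) * p1 * cnj p0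
                          + R $$ (1, 0) * p0 * cnj p1 + R $$ (1, 1) * p1 * cnj p1"
  shows "psd 2 R"
  unfolding psd_def
proof (intro conjI ballI R)
  fix v :: "complex vec" assume "v \<in> carrier_vec 2"
  then show "0 \<le> (R *\<^sub>v v) \<bullet> conjugate v" using quad_form_2x2[OF _ R, of v] nonneg[of "v $ 0" "v $ 1"] by simp
qed

lemma quad_form_add_smult:
  fixes X :: "complex mat"
  assumes X: "X \<in> carrier_mat n n" and w: "w \<in> carrier_vec n" and v: "v \<in> carrier_vec n"
  shows "(X *\<^sub>v (w + t \<cdot>\<^sub>v v)) \<bullet> conjugate (w + t \<cdot>\<^sub>v v) =
    (X *\<^sub>v w) \<bullet> conjugate w + cnj t * ((X *\<^sub>v w) \<bullet> conjugate v) + t * ((X *\<^sub>v v) \<bullet> conjugate w)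
    + t * cnj t * ((X *\<^sub>v v) \<bullet> conjugate v)"
proof -
  have tv: "t \<cdot>\<^sub>v v \<in> carrier_vec n" and tXv: "t \<cdot>\<^sub>v (X *\<^sub>v v) \<in> carrier_vec n" using X v by auto
  have Xw: "X *\<^sub>v w \<in> carrier_vec n" and Xv: "X *\<^sub>v v \<in> carrier_vec n" using X w v by auto
  have cw: "conjugate w \<in> carrier_vec n" and cv: "conjugate v \<in> carrier_vec n"
    and ctv: "cnj t \<cdot>\<^sub>v conjugate v \<in> carrier_vec n" using w v by auto
  have "X *\<^sub>v (w + t \<cdot>\<^sub>v v) = X *\<^sub>v w + t \<cdot>\<^sub>v (X *\<^sub>v v)"
    using mult_add_distrib_mat_vec[OF X w tv] mult_mat_vec[OF X v] by simp
  moreover have "conjugate (w + t \<cdot>\<^sub>v v) = conjugate w + cnj t \<cdot>\<^sub>v conjugate v"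
    using conjugate_add_vec[OF w tv] conjugate_smult_vec[of t v] by simp
  moreover have "(X *\<^sub>v w + t \<cdot>\<^sub>v (X *\<^sub>v v)) \<bullet> (conjugate w + cnj t \<cdot>\<^sub>v conjugate v)
     = ((X *\<^sub>v w) \<bullet> conjugate w + (X *\<^sub>v w) \<bullet> (cnj t \<cdot>\<^sub>v conjugate v))
      + ((t \<cdot>\<^sub>v (X *\<^sub>v v)) \<bullet> conjugate w + (t \<cdot>\<^sub>v (X *\<^sub>v v)) \<bullet> (cnj t \<cdot>\<^sub>v conjugate v))"
    using add_scalar_prod_distrib[OF Xw tXv, of "conjugate w + cnj t \<cdot>\<^sub>v conjugate v"]
      scalar_prod_add_distrib[OF Xw cw ctv] scalar_prod_add_distrib[OF tXv cw ctv] cw ctv by simp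
  ultimately show ?thesis
    using Xw Xv cw cv by (simp add: scalar_prod_smult_distrib[of _ n] smult_scalar_prod_distrib[of _ n] mult.assoc)
qed

lemma real_linear_coeff_zero:
  fixes P G :: real
  assumes nonneg: "\<And>r. 0 \<le> r * P + r\<^sup>2 * G" and G: "0 \<le> G"
  shows "P = 0"
proof (rule ccontr)
  assume "P \<noteq> 0"
  define r where "r = - P / (G + 1)"
  have "G + 1 \<noteq> 0" using G by simp
  then have "P + r * G = P / (G + 1)" by (simp add: r_def field_simps)
  have "r * P + r\<^sup>2 * G = r * (P + r * G)" by (simp add: power2_eq_square algebra_simps)
  also have "\<dots> = - (P / (G + 1))\<^sup>2" unfolding \<open>P + r * G = _\<close> by (simp add: r_def power2_eq_square)
  also have "\<dots> < 0" using \<open>P \<noteq> 0\<close> \<open>G + 1 \<noteq> 0\<close> by simp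
  finally show False using nonneg[of r] by simp
qed

lemma complex_linear_coeff_zero:
  fixes p g :: complex
  assumes nonneg: "\<And>r::real. 0 \<le> of_real r * p + of_real (r\<^sup>2) * g" and g: "0 \<le> g"
  shows "p = 0"
proof -
  have "Im g = 0" and "0 \<le> Re g" using g by (auto simp: less_eq_complex_def)
  moreover have "Im (of_real 1 * p + of_real (1\<^sup>2) * g) = 0" using nonneg[of 1] by (simp add: less_eq_complex_def)
  ultimately have "Im p = 0" by simp
  moreover have "Re p = 0"
    using nonneg \<open>0 \<le> Re g\<close> by (intro real_linear_coeff_zero[of "Re p" "Re g"]) (simp_all add: less_eq_complex_def)
  ultimately show ?thesis by (simp add: complex_eq_iff)
qed

text \<open>A vector in the null cone of a positive semidefinite form is orthogonal to everything:
  otherwise \<open>w + t v\<close> would have negative norm for a suitable small \<open>t\<close>.\<close>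

lemma psd_quad_form_zero_imp_orthogonal:
  fixes X :: "complex mat"
  assumes ps: "psd n X" and w: "w \<in> carrier_vec n" and zero: "(X *\<^sub>v w) \<bullet> conjugate w = 0"
    and v: "v \<in> carrier_vec n"
  shows "(X *\<^sub>v w) \<bullet> conjugate v = 0" and "(X *\<^sub>v v) \<bullet> conjugate w = 0"
proof -
  have X: "X \<in> carrier_mat n n" using ps by (rule psd_carrier)
  define \<alpha> where "\<alpha> = (X *\<^sub>v w) \<bullet> conjugate v"
  define \<beta> where "\<beta> = (X *\<^sub>v v) \<bullet> conjugate w"
  define \<gamma> where "\<gamma> = (X *\<^sub>v v) \<bullet> conjugate v"
  have \<gamma>: "0 \<le> \<gamma>" unfolding \<gamma>_def using psd_quad_form_nonneg[OF ps v] .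
  have E: "0 \<le> cnj t * \<alpha> + t * \<beta> + t * cnj t * \<gamma>" for t
  proof -
    have "w + t \<cdot>\<^sub>v v \<in> carrier_vec n" using w v by simp
    from psd_quad_form_nonneg[OF ps this] show ?thesis
      unfolding quad_form_add_smult[OF X w v] zero \<alpha>_def \<beta>_def \<gamma>_def by simp
  qed
  have "\<alpha> + \<beta> = 0"
  proof (rule complex_linear_coeff_zero[OF _ \<gamma>])
    fix r :: real
    show "0 \<le> of_real r * (\<alpha> + \<beta>) + of_real (r\<^sup>2) * \<gamma>"
      using E[of "of_real r"] by (simp add: algebra_simps power2_eq_square)
  qed
  moreover have "\<i> * (\<beta> - \<alpha>) = 0"
  proof (rule complex_linear_coeff_zero[OF _ \<gamma>])
    fix r :: real
    have "cnj (\<i> * of_real r) * \<alpha> + (\<i> * of_real r) * \<beta> + (\<i> * of_real r) * cnj (\<i> * of_real r) * \<gamma>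
      = of_real r * (\<i> * (\<beta> - \<alpha>)) + of_real (r\<^sup>2) * \<gamma>"
      by (simp add: algebra_simps power2_eq_square)
    then show "0 \<le> of_real r * (\<i> * (\<beta> - \<alpha>)) + of_real (r\<^sup>2) * \<gamma>"
      using E[of "\<i> * of_real r"] by simp
  qed
  ultimately have "\<alpha> = 0" "\<beta> = 0" by auto
  then show "(X *\<^sub>v w) \<bullet> conjugate v = 0" "(X *\<^sub>v v) \<bullet> conjugate w = 0" unfolding \<alpha>_def \<beta>_def by simp_all
qed

lemma quad_form_vec:
  "X \<in> carrier_mat n n \<Longrightarrow>
   (X *\<^sub>v vec n g) \<bullet> conjugate (vec n f) = (\<Sum>i<n. \<Sum>j<n. cnj (f i) * X $$ (i, j) * g j)"
  by (simp add: scalar_prod_def atLeast0LessThan mult_mat_vec_def row_def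
      sum_distrib_right sum_distrib_left mult_ac)

lemma psd_quad_form_sum_nonneg: "psd n X \<Longrightarrow> 0 \<le> (\<Sum>i<n. \<Sum>j<n. cnj (f i) * X $$ (i, j) * f j)"
  using psd_quad_form_nonneg[of n X "vec n f"] quad_form_vec[OF psd_carrier] by simp

lemma sum_indicator_left:
  assumes "k < (n::nat)" shows "(\<Sum>i<n. cnj (if i = k then 1 else 0) * h i) = (h k :: complex)"
proof -
  have "(\<Sum>i<n. cnj (if i = k then 1 else 0) * h i) = (\<Sum>i<n. if i = k then h i else 0)"
    by (intro sum.cong) simp_all
  then show ?thesis using assms by (simp add: sum.delta')
qed

lemma sum_indicator_right:
  assumes "k < (n::nat)" shows "(\<Sum>j<n. h j * (if j = k then 1 else 0)) = (h k :: complex)"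
proof -
  have "(\<Sum>j<n. h j * (if j = k then 1 else 0)) = (\<Sum>j<n. if j = k then h j else 0)"
    by (intro sum.cong) simp_all
  then show ?thesis using assms by (simp add: sum.delta')
qed

lemma psd_null_vector_entries:
  assumes ps: "psd n X" and zero: "(\<Sum>i<n. \<Sum>j<n. cnj (w i) * X $$ (i, j) * w j) = 0" and k: "k < n"
  shows "(\<Sum>j<n. X $$ (k, j) * w j) = 0" and "(\<Sum>i<n. cnj (w i) * X $$ (i, k)) = 0"
proof -
  have X: "X \<in> carrier_mat n n" using ps by (rule psd_carrier)
  define e where "e = (\<lambda>i::nat. if i = k then (1::complex) else 0)"
  have "(X *\<^sub>v vec n w) \<bullet> conjugate (vec n w) = 0" using zero quad_form_vec[OF X] by simp
  from psd_quad_form_zero_imp_orthogonal[OF ps _ this, of "vec n e"]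
  have "(X *\<^sub>v vec n w) \<bullet> conjugate (vec n e) = 0" "(X *\<^sub>v vec n e) \<bullet> conjugate (vec n w) = 0" by auto
  then have "(\<Sum>i<n. \<Sum>j<n. cnj (e i) * X $$ (i, j) * w j) = 0" "(\<Sum>i<n. \<Sum>j<n. cnj (w i) * X $$ (i, j) * e j) = 0"
    by (simp_all add: quad_form_vec[OF X])
  moreover have "(\<Sum>i<n. \<Sum>j<n. cnj (e i) * X $$ (i, j) * w j) = (\<Sum>j<n. X $$ (k, j) * w j)"
    unfolding e_def using sum_indicator_left[OF k, of "\<lambda>i. \<Sum>j<n. X $$ (i, j) * w j"]
    by (simp add: sum_distrib_left mult.assoc)
  moreover have "(\<Sum>i<n. \<Sum>j<n. cnj (w i) * X $$ (i, j) * e j) = (\<Sum>i<n. cnj (w i) * X $$ (i, k))"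
    unfolding e_def using sum_indicator_right[OF k, of "\<lambda>j. \<Sum>i<n. cnj (w i) * X $$ (i, j)"]
    by (subst sum.swap) (simp add: sum_distrib_right)
  ultimately show "(\<Sum>j<n. X $$ (k, j) * w j) = 0" "(\<Sum>i<n. cnj (w i) * X $$ (i, k)) = 0" by simp_all
qed

lemma psd_diag_nonneg: "psd n X \<Longrightarrow> i < n \<Longrightarrow> 0 \<le> X $$ (i, i)"
  using psd_quad_form_sum_nonneg[of n X "\<lambda>a. if a = i then 1 else 0"]
    sum_indicator_left[of i n "\<lambda>a. \<Sum>b<n. X $$ (a, b) * (if b = i then 1 else 0)"]
    sum_indicator_right[of i n "\<lambda>b. X $$ (i, b)"]
  by (simp add: sum_distrib_left mult.assoc)

lemma psd_zero_diag_imp_zero_row_col: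
  assumes ps: "psd n X" and i: "i < n" and zero: "X $$ (i, i) = 0" and k: "k < n"
  shows "X $$ (k, i) = 0" and "X $$ (i, k) = 0"
proof -
  define e where "e = (\<lambda>a::nat. if a = i then (1::complex) else 0)"
  have "(\<Sum>a<n. \<Sum>b<n. cnj (e a) * X $$ (a, b) * e b) = X $$ (i, i)"
    using sum_indicator_left[OF i, of "\<lambda>a. \<Sum>b<n. X $$ (a, b) * e b"] sum_indicator_right[OF i, of "\<lambda>b. X $$ (i, b)"]
    by (simp add: e_def sum_distrib_left mult.assoc)
  with zero have "(\<Sum>a<n. \<Sum>b<n. cnj (e a) * X $$ (a, b) * e b) = 0" by simp
  from psd_null_vector_entries[OF ps this k] show "X $$ (k, i) = 0" "X $$ (i, k) = 0"
    unfolding e_def using sum_indicator_right[OF i, of "\<lambda>b. X $$ (k, b)"]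
      sum_indicator_left[OF i, of "\<lambda>a. X $$ (a, k)"] by simp_all
qed

section \<open>The qubit SIC-POVM\<close>

lemma atLeastAtMost_1_4: "{1..4::nat} = {1, 2, 3, 4}"
  by auto

definition omega :: complex where "omega = Complex (-1/2) (sqrt 3 / 2)"

lemma omega_sq: "omega * omega = cnj omega"
  and cnj_omega_sq: "cnj omega * cnj omega = omega"
  and omega_mult_cnj: "omega * cnj omega = 1"
  and omega_add_cnj: "omega + cnj omega = -1"
  and omega_neq_cnj: "omega \<noteq> cnj omega"
  by (simp_all add: omega_def complex_eq_iff field_simps)

lemma cis_omega: "cis (2 * pi / 3) = omega" and cis_omega_sq: "cis (2 * pi * 2 / 3) = cnj omega"
proof -
  show "cis (2 * pi / 3) = omega" using cos_120 sin_120 by (simp add: omega_def cis.ctr)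
  moreover have "cis (2 * pi * 2 / 3) = cis (2 * pi / 3) * cis (2 * pi / 3)" by (simp add: cis_mult)
  ultimately show "cis (2 * pi * 2 / 3) = cnj omega" using omega_sq by simp
qed

definition sic_amp0 :: complex where "sic_amp0 = of_real (1 / sqrt 3)"
definition sic_amp1 :: complex where "sic_amp1 = of_real (sqrt (2 / 3))"

lemma sic_amp0_sq: "sic_amp0 * sic_amp0 = 1/3"
  and sic_amp1_sq: "sic_amp1 * sic_amp1 = 2/3"
  and cnj_sic_amp0 [simp]: "cnj sic_amp0 = sic_amp0"
  and cnj_sic_amp1 [simp]: "cnj sic_amp1 = sic_amp1"
  and sic_amp1_nonzero: "sic_amp1 \<noteq> 0"
  and sic_amps_nonzero: "sic_amp0 * sic_amp1 \<noteq> 0"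
  by (simp_all add: sic_amp0_def sic_amp1_def flip: of_real_mult)

text \<open>\<open>sic_phase j = cis (2 \<pi> (j - 2) / 3)\<close> is the phase of the second amplitude of
  \<open>\<phi>\<^sub>j\<close> for \<open>j = 2, 3, 4\<close>.\<close>

definition sic_phase :: "nat \<Rightarrow> complex" where
  "sic_phase j = (if j = 2 then 1 else if j = 3 then omega else cnj omega)"

lemma sic_phi_1_nth [simp]: "sic_phi (Suc 0) $ 0 = 1" "sic_phi (Suc 0) $ Suc 0 = 0"
  by (simp_all add: sic_phi_def)

lemma sic_phi_phase:
  "j \<in> {2, 3, 4} \<Longrightarrow> sic_phi j = vec 2 (\<lambda>a. if a = 0 then sic_amp0 else sic_amp1 * sic_phase j)"
  using cis_omega cis_omega_sq by (auto simp: sic_phi_def sic_phase_def sic_amp0_def sic_amp1_def)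

lemma dim_sic_phi [simp]: "dim_vec (sic_phi j) = 2"
  by (simp add: sic_phi_def)

lemma sic_phase_mult_cnj: "j \<in> {2, 3, 4} \<Longrightarrow> sic_phase j * cnj (sic_phase j) = 1"
  using omega_mult_cnj by (auto simp: sic_phase_def mult.commute)

lemma sic_phase_sum: "sic_phase 2 + sic_phase 3 + sic_phase 4 = 0"
  and cnj_sic_phase_sum: "cnj (sic_phase 2) + cnj (sic_phase 3) + cnj (sic_phase 4) = 0"
  using omega_add_cnj by (simp_all add: sic_phase_def add.commute add.left_commute)

lemma sic_phase_cross:
  assumes "i \<in> {2, 3, 4}" "j \<in> {2, 3, 4}" "i \<noteq> j"
  shows "sic_phase i * cnj (sic_phase j) + sic_phase j * cnj (sic_phase i) = -1"
proof -
  have "cnj omega + omega = -1" using omega_add_cnj by (simp add: add.commute)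
  with assms omega_add_cnj show ?thesis by (auto simp: sic_phase_def omega_sq cnj_omega_sq)
qed

definition sic_overlap :: "nat \<Rightarrow> nat \<Rightarrow> complex" where
  "sic_overlap i j = sic_phi i $ 0 * cnj (sic_phi j $ 0) + sic_phi i $ 1 * cnj (sic_phi j $ 1)"

lemma sic_overlap_self: "i \<in> {1..4} \<Longrightarrow> sic_overlap i i = 1"
proof -
  assume i: "i \<in> {1..4}"
  show ?thesis
  proof (cases "i = 1")
    case False
    then have i': "i \<in> {2, 3, 4}" using i by auto
    have "sic_overlap i i = sic_amp0 * sic_amp0 + sic_amp1 * sic_amp1 * (sic_phase i * cnj (sic_phase i))"
      by (simp add: sic_overlap_def sic_phi_phase[OF i'] algebra_simps)
    then show ?thesis by (simp add: sic_phase_mult_cnj[OF i'] sic_amp0_sq sic_amp1_sq)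
  qed (simp add: sic_overlap_def)
qed

lemma sic_overlap_sq:
  assumes i: "i \<in> {1..4}" and j: "j \<in> {1..4}"
  shows "sic_overlap i j * sic_overlap j i = (if i = j then 1 else 1/3)"
proof (cases "i = j")
  case True then show ?thesis using sic_overlap_self[OF i] by simp
next
  case False
  then consider "i = 1" "j \<in> {2, 3, 4}" | "i \<in> {2, 3, 4}" "j = 1" | "i \<in> {2, 3, 4}" "j \<in> {2, 3, 4}"
    using i j unfolding atLeastAtMost_1_4 by auto
  then show ?thesis
  proof cases
    case 3
    have "sic_overlap i j * sic_overlap j i =
        (sic_amp0 * sic_amp0 + sic_amp1 * sic_phase i * (sic_amp1 * cnj (sic_phase j)))
        * (sic_amp0 * sic_amp0 + sic_amp1 * sic_phase j * (sic_amp1 * cnj (sic_phase i)))"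
      using 3 by (simp add: sic_overlap_def sic_phi_phase)
    also have "\<dots> =
        sic_amp0 * sic_amp0 * (sic_amp0 * sic_amp0)
        + sic_amp0 * sic_amp0 * (sic_amp1 * sic_amp1)
          * (sic_phase i * cnj (sic_phase j) + sic_phase j * cnj (sic_phase i))
        + sic_amp1 * sic_amp1 * (sic_amp1 * sic_amp1)
          * ((sic_phase i * cnj (sic_phase i)) * (sic_phase j * cnj (sic_phase j)))"
      by (simp add: algebra_simps)
    also have "\<dots> = 1/3"
      unfolding sic_phase_cross[OF 3 False] sic_phase_mult_cnj[OF 3(1)] sic_phase_mult_cnj[OF 3(2)]
        sic_amp0_sq sic_amp1_sq by simp
    finally show ?thesis using False by simp
  qed (auto simp: sic_overlap_def sic_phi_phase sic_amp0_sq)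
qed

lemma sic_E_carrier: "sic_E j \<in> carrier_mat 2 2"
  by (simp add: sic_E_def ketbra_def)

definition sic_dual :: "nat \<Rightarrow> complex mat" where
  "sic_dual i = 3 \<cdot>\<^sub>m ketbra (sic_phi i) - 1\<^sub>m 2"

lemma dim_sic_dual [simp]: "dim_row (sic_dual i) = 2" "dim_col (sic_dual i) = 2"
  by (simp_all add: sic_dual_def ketbra_def)

lemma sic_dual_carrier: "sic_dual i \<in> carrier_mat 2 2"
  by (rule carrier_matI) simp_all

lemma mtrace_half_ketbra_mult:
  assumes "dim_vec p = 2" "M \<in> carrier_mat 2 2"
  shows "mtrace ((1/2) \<cdot>\<^sub>m ketbra p * M) = (1/2) * (p $ 0 * cnj (p $ 0) * M $$ (0, 0)
    + p $ 0 * cnj (p $ 1) * M $$ (1, 0) + p $ 1 * cnj (p $ 0) * M $$ (0, 1) + p $ 1 * cnj (p $ 1) * M $$ (1, 1))"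
  using assms by (subst mtrace_mult_2x2) (auto simp: ketbra_def algebra_simps)

lemma mtrace_half_ketbra_mult_dual:
  assumes "dim_vec p = 2" "dim_vec q = 2"
  shows "mtrace ((1/2) \<cdot>\<^sub>m ketbra p * (3 \<cdot>\<^sub>m ketbra q - 1\<^sub>m 2)) =
    (1/2) * (3 * ((p $ 0 * cnj (q $ 0) + p $ 1 * cnj (q $ 1)) * (q $ 0 * cnj (p $ 0) + q $ 1 * cnj (p $ 1)))
      - (p $ 0 * cnj (p $ 0) + p $ 1 * cnj (p $ 1)))"
  using assms by (subst mtrace_mult_2x2) (auto simp: ketbra_def algebra_simps)

lemma mtrace_sic_E_mult:
  assumes "M \<in> carrier_mat 2 2"
  shows "mtrace (sic_E j * M) = (1/2) * (
    sic_phi j $ 0 * cnj (sic_phi j $ 0) * M $$ (0, 0) + sic_phi j $ 0 * cnj (sic_phi j $ 1) * M $$ (1, 0)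
    + sic_phi j $ 1 * cnj (sic_phi j $ 0) * M $$ (0, 1) + sic_phi j $ 1 * cnj (sic_phi j $ 1) * M $$ (1, 1))"
  unfolding sic_E_def using assms by (intro mtrace_half_ketbra_mult) simp_all

lemma mtrace_sic_E_sic_dual:
  assumes i: "i \<in> {1..4}" and j: "j \<in> {1..4}"
  shows "mtrace (sic_E j * sic_dual i) = (if i = j then 1 else 0)"
proof -
  have "mtrace (sic_E j * sic_dual i) = (1/2) * (3 * (sic_overlap j i * sic_overlap i j) - sic_overlap j j)"
    unfolding sic_E_def sic_dual_def sic_overlap_def by (intro mtrace_half_ketbra_mult_dual) simp_all
  then show ?thesis using sic_overlap_sq[OF j i] sic_overlap_self[OF j] by auto
qed

lemma mtrace_sic_dual: "i \<in> {1..4} \<Longrightarrow> mtrace (sic_dual i) = 1"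
proof -
  assume i: "i \<in> {1..4}"
  have "mtrace (sic_dual i) = 3 * sic_overlap i i - 2"
    by (simp add: sic_dual_def ketbra_def mtrace_def numeral_2_eq_2 sic_overlap_def algebra_simps)
  then show ?thesis using sic_overlap_self[OF i] by simp
qed

lemma mtrace_sic_E_1_mult: "M \<in> carrier_mat 2 2 \<Longrightarrow> mtrace (sic_E 1 * M) = M $$ (0, 0) / 2"
  by (simp add: mtrace_sic_E_mult)

lemma mtrace_sic_E_phase_mult:
  assumes j: "j \<in> {2, 3, 4}" and M: "M \<in> carrier_mat 2 2"
  shows "mtrace (sic_E j * M) = (1/2) * (sic_amp0 * sic_amp0 * M $$ (0, 0)
    + sic_amp0 * sic_amp1 * (cnj (sic_phase j) * M $$ (1, 0) + sic_phase j * M $$ (0, 1))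
    + sic_amp1 * sic_amp1 * M $$ (1, 1))"
proof -
  have "mtrace (sic_E j * M) = (1/2) * (sic_amp0 * sic_amp0 * M $$ (0, 0)
    + sic_amp0 * sic_amp1 * (cnj (sic_phase j) * M $$ (1, 0) + sic_phase j * M $$ (0, 1))
    + sic_amp1 * sic_amp1 * (sic_phase j * cnj (sic_phase j)) * M $$ (1, 1))"
    by (simp add: mtrace_sic_E_mult[OF M] sic_phi_phase[OF j] algebra_simps)
  then show ?thesis by (simp add: sic_phase_mult_cnj[OF j])
qed

lemma sum_mtrace_sic_E_mult:
  assumes M: "M \<in> carrier_mat 2 2"
  shows "(\<Sum>j\<in>{1..4::nat}. mtrace (sic_E j * M)) = mtrace M"
proof -
  have "(\<Sum>j\<in>{1..4::nat}. mtrace (sic_E j * M)) =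
      mtrace (sic_E 1 * M) + mtrace (sic_E 2 * M) + mtrace (sic_E 3 * M) + mtrace (sic_E 4 * M)"
    unfolding atLeastAtMost_1_4 by simp
  also have "\<dots> = M $$ (0, 0) / 2 + (1/2) * (3 * (sic_amp0 * sic_amp0) * M $$ (0, 0)
      + sic_amp0 * sic_amp1 * ((cnj (sic_phase 2) + cnj (sic_phase 3) + cnj (sic_phase 4)) * M $$ (1, 0)
      + (sic_phase 2 + sic_phase 3 + sic_phase 4) * M $$ (0, 1))
      + 3 * (sic_amp1 * sic_amp1) * M $$ (1, 1))"
    using mtrace_sic_E_1_mult[OF M] mtrace_sic_E_phase_mult[of 2 M] mtrace_sic_E_phase_mult[of 3 M]
      mtrace_sic_E_phase_mult[of 4 M] M by (simp add: algebra_simps)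
  also have "\<dots> = mtrace M"
    unfolding sic_phase_sum cnj_sic_phase_sum sic_amp0_sq sic_amp1_sq mtrace_2x2[OF M] by (simp add: field_simps)
  finally show ?thesis .
qed

lemma mtrace_sic_E_nonneg:
  assumes ps: "psd 2 \<rho>"
  shows "0 \<le> mtrace (sic_E j * \<rho>)"
proof -
  have R: "\<rho> \<in> carrier_mat 2 2" using ps by (rule psd_carrier)
  have "0 \<le> (\<rho> *\<^sub>v sic_phi j) \<bullet> conjugate (sic_phi j)"
    using psd_quad_form_nonneg[OF ps carrier_vecI[OF dim_sic_phi]] .
  also have "(\<rho> *\<^sub>v sic_phi j) \<bullet> conjugate (sic_phi j) = 2 * mtrace (sic_E j * \<rho>)"
    unfolding mtrace_sic_E_mult[OF R] quad_form_2x2[OF dim_sic_phi R] by (simp add: ac_simps)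
  finally show ?thesis by (simp add: less_eq_complex_def)
qed

lemma sic_phase_system_trivial:
  assumes e: "\<And>j. j \<in> {2, 3, 4} \<Longrightarrow>
    sic_amp0 * sic_amp1 * (cnj (sic_phase j) * a + sic_phase j * b) + sic_amp1 * sic_amp1 * c = 0"
  shows "a = 0" "b = 0" "c = 0"
proof -
  have "sic_amp0 * sic_amp1 * ((cnj (sic_phase 2) + cnj (sic_phase 3) + cnj (sic_phase 4)) * a
      + (sic_phase 2 + sic_phase 3 + sic_phase 4) * b) + 3 * (sic_amp1 * sic_amp1) * c =
      (sic_amp0 * sic_amp1 * (cnj (sic_phase 2) * a + sic_phase 2 * b) + sic_amp1 * sic_amp1 * c)
      + (sic_amp0 * sic_amp1 * (cnj (sic_phase 3) * a + sic_phase 3 * b) + sic_amp1 * sic_amp1 * c)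
      + (sic_amp0 * sic_amp1 * (cnj (sic_phase 4) * a + sic_phase 4 * b) + sic_amp1 * sic_amp1 * c)"
    by (simp add: algebra_simps)
  also have "\<dots> = 0" using e[of 2] e[of 3] e[of 4] by simp
  finally show c0: "c = 0" using sic_amp1_nonzero by (simp add: sic_phase_sum cnj_sic_phase_sum)
  have "a + b = 0" using e[of 2] c0 sic_amps_nonzero by (simp add: sic_phase_def)
  then have "a = - b" by (simp add: eq_neg_iff_add_eq_0)
  moreover have "cnj omega * a + omega * b = 0" using e[of 3] c0 sic_amps_nonzero by (simp add: sic_phase_def)
  ultimately have "(omega - cnj omega) * b = 0" by (simp add: algebra_simps)
  then show b0: "b = 0" using omega_neq_cnj by simp
  with \<open>a = - b\<close> show "a = 0" by simp
qed

lemma sic_statistics_determine_mat: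
  assumes Y: "Y \<in> carrier_mat 2 2" and R: "R \<in> carrier_mat 2 2"
    and eq: "\<And>j. j \<in> {1..4} \<Longrightarrow> mtrace (sic_E j * Y) = mtrace (sic_E j * R)"
  shows "Y = R"
proof -
  define a where "a = Y $$ (1, 0) - R $$ (1, 0)"
  define b where "b = Y $$ (0, 1) - R $$ (0, 1)"
  define c where "c = Y $$ (1, 1) - R $$ (1, 1)"
  have d00: "Y $$ (0, 0) = R $$ (0, 0)"
    using eq[of 1] mtrace_sic_E_1_mult[OF Y] mtrace_sic_E_1_mult[OF R] by simp
  have "sic_amp0 * sic_amp1 * (cnj (sic_phase j) * a + sic_phase j * b) + sic_amp1 * sic_amp1 * c = 0"
    if j: "j \<in> {2, 3, 4}" for j
  proof -
    have "mtrace (sic_E j * Y) - mtrace (sic_E j * R) = 0" using eq j by auto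
    then have "(1/2) * (sic_amp0 * sic_amp1 * (cnj (sic_phase j) * a + sic_phase j * b) + sic_amp1 * sic_amp1 * c) = 0"
      unfolding mtrace_sic_E_phase_mult[OF j Y] mtrace_sic_E_phase_mult[OF j R] a_def b_def c_def d00
      by (simp add: algebra_simps)
    then show ?thesis by simp
  qed
  note abc = sic_phase_system_trivial[OF this]
  show ?thesis
  proof (rule eq_matI)
    fix i j assume "i < dim_row R" "j < dim_col R"
    then have "i = 0 \<or> i = 1" "j = 0 \<or> j = 1" using R by auto
    then show "Y $$ (i, j) = R $$ (i, j)"
      using d00 abc unfolding a_def b_def c_def by auto
  qed (use Y R in simp_all)
qed

section \<open>Pseudo-broadcasting\<close>

lemma Xi_eq_sic_dual:
  "Xi n \<rho> = mat (2 ^ n) (2 ^ n) (\<lambda>(r, c). \<Sum>i\<in>{1..4::nat}. mtrace (sic_E i * \<rho>) * kron_pow (sic_dual i) n $$ (r, c))"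
  by (simp add: Xi_def sic_dual_def)

lemma Xi_carrier: "Xi n \<rho> \<in> carrier_mat (2 ^ n) (2 ^ n)"
  by (simp add: Xi_def)

lemma lin_map_Xi: "lin_map 2 (2 ^ n) (Xi n)"
  unfolding lin_map_def
proof (intro conjI ballI allI)
  fix A B :: "complex mat" assume A: "A \<in> carrier_mat 2 2" and B: "B \<in> carrier_mat 2 2"
  show "Xi n (A + B) = Xi n A + Xi n B"
    by (rule eq_matI) (simp_all add: Xi_def mtrace_mult_add_right[OF sic_E_carrier A B] distrib_right sum.distrib)
next
  fix A :: "complex mat" and c :: complex assume A: "A \<in> carrier_mat 2 2"
  show "Xi n (c \<cdot>\<^sub>m A) = c \<cdot>\<^sub>m Xi n A"
    by (rule eq_matI) (simp_all add: Xi_def mtrace_mult_smult_right[OF sic_E_carrier A] sum_distrib_left mult_ac)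
qed (rule Xi_carrier)

lemma trace_preserving_Xi: "trace_preserving 2 (Xi n)"
  unfolding trace_preserving_def
proof
  fix A :: "complex mat" assume A: "A \<in> carrier_mat 2 2"
  have dims: "dim_row (kron_pow (sic_dual i) n) = 2 ^ n" for i
    using kron_pow_carrier[OF sic_dual_carrier] by blast
  have "mtrace (Xi n A) = (\<Sum>r<2 ^ n. \<Sum>i\<in>{1..4::nat}. mtrace (sic_E i * A) * kron_pow (sic_dual i) n $$ (r, r))"
    by (simp add: Xi_eq_sic_dual mtrace_def)
  also have "\<dots> = (\<Sum>i\<in>{1..4::nat}. mtrace (sic_E i * A) * mtrace (kron_pow (sic_dual i) n))"
    by (subst sum.swap) (simp add: sum_distrib_left mtrace_def dims)
  also have "\<dots> = (\<Sum>i\<in>{1..4::nat}. mtrace (sic_E i * A))"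
    by (intro sum.cong refl) (simp add: mtrace_kron_pow[OF sic_dual_carrier] mtrace_sic_dual)
  also have "\<dots> = mtrace A" using sum_mtrace_sic_E_mult[OF A] .
  finally show "mtrace (Xi n A) = mtrace A" .
qed

lemma mtrace_kron_sic_E_mult_Xi_nonneg:
  assumes len: "length is = n" and idx: "set is \<subseteq> {1..4}" and \<rho>: "psd 2 \<rho>"
  shows "0 \<le> mtrace (kron_list (map sic_E is) * Xi n \<rho>)"
proof -
  have Es: "set (map sic_E is) \<subseteq> carrier_mat 2 2" using sic_E_carrier by auto
  have "kron_list (map sic_E is) \<in> carrier_mat (2 ^ n) (2 ^ n)"
    using kron_list_carrier[OF Es] len by simp
  then have "mtrace (kron_list (map sic_E is) * Xi n \<rho>) = (\<Sum>i\<in>{1..4::nat}.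
      mtrace (sic_E i * \<rho>) * mtrace (kron_list (map sic_E is) * kron_pow (sic_dual i) n))"
    unfolding Xi_eq_sic_dual by (rule mtrace_mult_lin_comb[OF _ kron_pow_carrier[OF sic_dual_carrier]])
  also have "0 \<le> \<dots>"
  proof (intro sum_nonneg mult_nonneg_nonneg)
    fix i :: nat assume i: "i \<in> {1..4}"
    show "0 \<le> mtrace (sic_E i * \<rho>)" using \<rho> by (rule mtrace_sic_E_nonneg)
    have "set (replicate n (sic_dual i)) \<subseteq> carrier_mat 2 2" using sic_dual_carrier by auto
    then have "mtrace (kron_list (map sic_E is) * kron_pow (sic_dual i) n) =
        (\<Prod>k<n. mtrace (sic_E (is ! k) * sic_dual i))"
      unfolding kron_pow_def using mtrace_kron_list_mult[OF _ Es] len by simp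
    also have "0 \<le> \<dots>"
    proof (rule prod_nonneg_complex)
      fix k assume "k < n"
      then have "is ! k \<in> {1..4}" using len idx nth_mem by blast
      then show "0 \<le> mtrace (sic_E (is ! k) * sic_dual i)"
        using mtrace_sic_E_sic_dual[OF i] by (simp add: less_eq_complex_def)
    qed
    finally show "0 \<le> mtrace (kron_list (map sic_E is) * kron_pow (sic_dual i) n)" .
  qed
  finally show ?thesis .
qed

lemma ptrace_keep_Xi:
  assumes k: "1 \<le> k" "k \<le> n"
  shows "ptrace_keep n k (Xi n \<rho>) = mat 2 2 (\<lambda>(a, b). \<Sum>i\<in>{1..4::nat}. mtrace (sic_E i * \<rho>) * sic_dual i $$ (a, b))"
proof (rule eq_matI)
  fix a b assume "a < dim_row (mat 2 2 (\<lambda>(a, b). \<Sum>i\<in>{1..4::nat}. mtrace (sic_E i * \<rho>) * sic_dual i $$ (a, b)))"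
    and "b < dim_col (mat 2 2 (\<lambda>(a, b). \<Sum>i\<in>{1..4::nat}. mtrace (sic_E i * \<rho>) * sic_dual i $$ (a, b)))"
  then have a: "a < 2" and b: "b < 2" by auto
  have "ptrace_keep n k (Xi n \<rho>) $$ (a, b) = (\<Sum>r<2 ^ (n - 1). \<Sum>i\<in>{1..4::nat}.
      mtrace (sic_E i * \<rho>) * kron_pow (sic_dual i) n $$ (qins n k a r, qins n k b r))"
    using a b qins_less[OF k a] qins_less[OF k b] by (simp add: ptrace_keep_def Xi_eq_sic_dual)
  also have "\<dots> = (\<Sum>i\<in>{1..4::nat}. mtrace (sic_E i * \<rho>) * ptrace_keep n k (kron_pow (sic_dual i) n) $$ (a, b))"
    using a b by (subst sum.swap) (simp add: ptrace_keep_def sum_distrib_left)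
  also have "\<dots> = (\<Sum>i\<in>{1..4::nat}. mtrace (sic_E i * \<rho>) * sic_dual i $$ (a, b))"
    using a b by (intro sum.cong refl) (simp add: ptrace_keep_kron_pow[OF sic_dual_carrier k] mtrace_sic_dual)
  finally show "ptrace_keep n k (Xi n \<rho>) $$ (a, b) =
      mat 2 2 (\<lambda>(a, b). \<Sum>i\<in>{1..4::nat}. mtrace (sic_E i * \<rho>) * sic_dual i $$ (a, b)) $$ (a, b)"
    using a b by simp
qed (simp_all add: ptrace_keep_def)

lemma mtrace_sic_E_ptrace_keep_Xi:
  assumes j: "j \<in> {1..4}" and k: "1 \<le> k" "k \<le> n"
  shows "mtrace (sic_E j * ptrace_keep n k (Xi n \<rho>)) = mtrace (sic_E j * \<rho>)"
proof -
  have "mtrace (sic_E j * ptrace_keep n k (Xi n \<rho>)) =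
      (\<Sum>i\<in>{1..4::nat}. mtrace (sic_E i * \<rho>) * mtrace (sic_E j * sic_dual i))"
    unfolding ptrace_keep_Xi[OF k] by (rule mtrace_mult_lin_comb[OF sic_E_carrier sic_dual_carrier])
  also have "\<dots> = (\<Sum>i\<in>{1..4::nat}. if i = j then mtrace (sic_E i * \<rho>) else 0)"
    using j by (intro sum.cong refl) (simp add: mtrace_sic_E_sic_dual)
  also have "\<dots> = mtrace (sic_E j * \<rho>)" using j by simp
  finally show ?thesis .
qed

section \<open>No broadcasting of qubit states\<close>

definition proj0 :: "complex mat" where "proj0 = mat 2 2 (\<lambda>(a, b). if a = 0 \<and> b = 0 then 1 else 0)"
definition proj1 :: "complex mat" where "proj1 = mat 2 2 (\<lambda>(a, b). if a = 1 \<and> b = 1 then 1 else 0)"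
definition proj_plus :: "complex mat" where "proj_plus = mat 2 2 (\<lambda>_. 1/2)"
definition proj_minus :: "complex mat" where "proj_minus = mat 2 2 (\<lambda>(a, b). if a = b then 1/2 else -1/2)"

lemmas proj_defs = proj0_def proj1_def proj_plus_def proj_minus_def

lemma sum_lessThan_2: "(\<Sum>i<(2::nat). h i) = h 0 + h 1"
  and sum_lessThan_4: "(\<Sum>i<(4::nat). h i) = h 0 + h 1 + h 2 + h 3"
  by (simp_all add: eval_nat_numeral)

lemma proj_carrier:
  "proj0 \<in> carrier_mat 2 2" "proj1 \<in> carrier_mat 2 2" "proj_plus \<in> carrier_mat 2 2" "proj_minus \<in> carrier_mat 2 2"
  by (simp_all add: proj_defs)

lemma proj0_add_proj1: "proj0 + proj1 = proj_plus + proj_minus"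
proof (rule eq_matI)
  fix i j assume "i < dim_row (proj_plus + proj_minus)" "j < dim_col (proj_plus + proj_minus)"
  then have "i = 0 \<or> i = 1" "j = 0 \<or> j = 1" by (auto simp: proj_defs)
  then show "(proj0 + proj1) $$ (i, j) = (proj_plus + proj_minus) $$ (i, j)" by (auto simp: proj_defs)
qed (simp_all add: proj_defs)

lemma proj_states: "proj0 \<in> states 2" "proj1 \<in> states 2" "proj_plus \<in> states 2" "proj_minus \<in> states 2"
proof -
  have sq: "0 \<le> (x::complex) * cnj x" for x
    using conjugate_square_positive[of x] by simp
  have half_sq: "0 \<le> (1/2::complex) * (x * cnj x)" for x
    using sq[of x] by (simp add: less_eq_complex_def)
  have "psd 2 proj0" "psd 2 proj1" by (rule psd_2I; simp add: proj_defs sq)+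
  moreover have "psd 2 proj_plus"
  proof (rule psd_2I)
    fix p0 p1 :: complex
    have "proj_plus $$ (0, 0) * p0 * cnj p0 + proj_plus $$ (0, 1) * p1 * cnj p0 + proj_plus $$ (1, 0) * p0 * cnj p1
        + proj_plus $$ (1, 1) * p1 * cnj p1 = (1/2) * ((p0 + p1) * cnj (p0 + p1))"
      by (simp add: proj_defs algebra_simps)
    then show "0 \<le> proj_plus $$ (0, 0) * p0 * cnj p0 + proj_plus $$ (0, 1) * p1 * cnj p0
        + proj_plus $$ (1, 0) * p0 * cnj p1 + proj_plus $$ (1, 1) * p1 * cnj p1"
      using half_sq[of "p0 + p1"] by (simp only:)
  qed (simp add: proj_defs)
  moreover have "psd 2 proj_minus"
  proof (rule psd_2I)
    fix p0 p1 :: complex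
    have "proj_minus $$ (0, 0) * p0 * cnj p0 + proj_minus $$ (0, 1) * p1 * cnj p0 + proj_minus $$ (1, 0) * p0 * cnj p1
        + proj_minus $$ (1, 1) * p1 * cnj p1 = (1/2) * ((p0 - p1) * cnj (p0 - p1))"
      by (simp add: proj_defs algebra_simps)
    then show "0 \<le> proj_minus $$ (0, 0) * p0 * cnj p0 + proj_minus $$ (0, 1) * p1 * cnj p0
        + proj_minus $$ (1, 0) * p0 * cnj p1 + proj_minus $$ (1, 1) * p1 * cnj p1"
      using half_sq[of "p0 - p1"] by (simp only:)
  qed (simp add: proj_defs)
  moreover have "mtrace proj0 = 1" "mtrace proj1 = 1" "mtrace proj_plus = 1" "mtrace proj_minus = 1"
    by (simp_all add: proj_defs mtrace_def sum_lessThan_2)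
  ultimately show "proj0 \<in> states 2" "proj1 \<in> states 2" "proj_plus \<in> states 2" "proj_minus \<in> states 2"
    by (simp_all add: states_def)
qed

text \<open>\<open>minus_plus_weight X = 4 \<langle>-+|X|-+\<rangle>\<close>, since the sign vector \<open>(1, 1, -1, -1)\<close> is
  \<open>2 |-\<rangle> \<otimes> |+\<rangle>\<close> in the Kronecker ordering.\<close>

definition minus_plus_weight :: "complex mat \<Rightarrow> complex" where
  "minus_plus_weight X = (\<Sum>i<4. \<Sum>j<4. (if i < 2 then 1 else -1) * (if j < 2 then 1 else -1) * X $$ (i, j))"

lemma minus_plus_weight_expand:
  "minus_plus_weight X = X $$ (0, 0) + X $$ (0, 1) - X $$ (0, 2) - X $$ (0, 3)
     + X $$ (1, 0) + X $$ (1, 1) - X $$ (1, 2) - X $$ (1, 3)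
     - X $$ (2, 0) - X $$ (2, 1) + X $$ (2, 2) + X $$ (2, 3)
     - X $$ (3, 0) - X $$ (3, 1) + X $$ (3, 2) + X $$ (3, 3)"
  by (simp add: minus_plus_weight_def sum_lessThan_4)

lemma minus_plus_weight_add:
  "A \<in> carrier_mat 4 4 \<Longrightarrow> B \<in> carrier_mat 4 4 \<Longrightarrow>
   minus_plus_weight (A + B) = minus_plus_weight A + minus_plus_weight B"
  by (simp add: minus_plus_weight_def sum_lessThan_4 algebra_simps)

lemma index_ptrace2_2: "a < 2 \<Longrightarrow> b < 2 \<Longrightarrow> ptrace2 2 X $$ (a, b) = X $$ (a * 2, b * 2) + X $$ (a * 2 + 1, b * 2 + 1)"
  by (simp add: ptrace2_def sum_lessThan_2)

lemma index_ptrace1_2: "a < 2 \<Longrightarrow> b < 2 \<Longrightarrow> ptrace1 2 X $$ (a, b) = X $$ (a, b) + X $$ (2 + a, 2 + b)"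
  by (simp add: ptrace1_def sum_lessThan_2)

lemma minus_plus_weight_proj0_broadcast:
  assumes ps: "psd 4 X" and tr2: "ptrace2 2 X = proj0" and tr1: "ptrace1 2 X = proj0"
  shows "minus_plus_weight X = 1"
proof -
  have "X $$ (2, 2) + X $$ (3, 3) = 0" using index_ptrace2_2[of 1 1 X] tr2 by (simp add: proj_defs)
  moreover have "X $$ (1, 1) + X $$ (3, 3) = 0" using index_ptrace1_2[of 1 1 X] tr1 by (simp add: proj_defs)
  ultimately have z: "X $$ (1, 1) = 0" "X $$ (2, 2) = 0" "X $$ (3, 3) = 0"
    using psd_diag_nonneg[OF ps, of 1] psd_diag_nonneg[OF ps, of 2] psd_diag_nonneg[OF ps, of 3]
    by (simp_all add: add_nonneg_eq_0_iff)
  have "X $$ (0, 0) + X $$ (1, 1) = 1" using index_ptrace2_2[of 0 0 X] tr2 by (simp add: proj_defs)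
  with z have "X $$ (0, 0) = 1" by simp
  moreover have "X $$ (k, i) = 0" "X $$ (i, k) = 0" if "i \<in> {1, 2, 3}" "k < 4" for i k
    using psd_zero_diag_imp_zero_row_col[OF ps _ _ \<open>k < 4\<close>, of i] that z by auto
  ultimately show ?thesis unfolding minus_plus_weight_expand by simp
qed

lemma minus_plus_weight_proj1_broadcast:
  assumes ps: "psd 4 X" and tr2: "ptrace2 2 X = proj1" and tr1: "ptrace1 2 X = proj1"
  shows "minus_plus_weight X = 1"
proof -
  have "X $$ (0, 0) + X $$ (1, 1) = 0" using index_ptrace2_2[of 0 0 X] tr2 by (simp add: proj_defs)
  moreover have "X $$ (0, 0) + X $$ (2, 2) = 0" using index_ptrace1_2[of 0 0 X] tr1 by (simp add: proj_defs)
  ultimately have z: "X $$ (0, 0) = 0" "X $$ (1, 1) = 0" "X $$ (2, 2) = 0"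
    using psd_diag_nonneg[OF ps, of 0] psd_diag_nonneg[OF ps, of 1] psd_diag_nonneg[OF ps, of 2]
    by (simp_all add: add_nonneg_eq_0_iff)
  have "X $$ (2, 2) + X $$ (3, 3) = 1" using index_ptrace2_2[of 1 1 X] tr2 by (simp add: proj_defs)
  with z have "X $$ (3, 3) = 1" by simp
  moreover have "X $$ (k, i) = 0" "X $$ (i, k) = 0" if "i \<in> {0, 1, 2}" "k < 4" for i k
    using psd_zero_diag_imp_zero_row_col[OF ps _ _ \<open>k < 4\<close>, of i] that z by auto
  ultimately show ?thesis unfolding minus_plus_weight_expand by simp
qed

text \<open>If the first marginal is \<open>|+\<rangle>\<langle>+|\<close>, the null vectors \<open>|-\<rangle> \<otimes> |0\<rangle>\<close> and \<open>|-\<rangle> \<otimes> |1\<rangle>\<close>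
  of the positive form of \<open>X\<close> span \<open>|-+\<rangle>\<close>.\<close>

lemma minus_plus_weight_plus_first_marginal:
  assumes ps: "psd 4 X" and tr2: "ptrace2 2 X = proj_plus"
  shows "minus_plus_weight X = 0"
proof -
  define w0 where "w0 = (\<lambda>i::nat. if i = 0 then 1 else if i = 2 then -1 else (0::complex))"
  define w1 where "w1 = (\<lambda>i::nat. if i = 1 then 1 else if i = 3 then -1 else (0::complex))"
  have "(\<Sum>i<4. \<Sum>j<4. cnj (w0 i) * X $$ (i, j) * w0 j) + (\<Sum>i<4. \<Sum>j<4. cnj (w1 i) * X $$ (i, j) * w1 j)
     = ptrace2 2 X $$ (0, 0) - ptrace2 2 X $$ (0, 1) - ptrace2 2 X $$ (1, 0) + ptrace2 2 X $$ (1, 1)"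
    by (simp add: sum_lessThan_4 w0_def w1_def index_ptrace2_2)
  also have "\<dots> = 0" using tr2 by (simp add: proj_defs)
  finally have "(\<Sum>i<4. \<Sum>j<4. cnj (w0 i) * X $$ (i, j) * w0 j) = 0"
      and "(\<Sum>i<4. \<Sum>j<4. cnj (w1 i) * X $$ (i, j) * w1 j) = 0"
    using psd_quad_form_sum_nonneg[OF ps, of w0] psd_quad_form_sum_nonneg[OF ps, of w1]
    by (simp_all add: add_nonneg_eq_0_iff)
  from this[THEN psd_null_vector_entries(1)[OF ps]]
  have "X $$ (k, 0) = X $$ (k, 2)" "X $$ (k, 1) = X $$ (k, 3)" if "k < 4" for k
    using that by (simp_all add: sum_lessThan_4 w0_def w1_def)
  from this[of 0] this[of 1] this[of 2] this[of 3] show ?thesis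
    unfolding minus_plus_weight_expand by simp
qed

lemma minus_plus_weight_minus_second_marginal:
  assumes ps: "psd 4 X" and tr1: "ptrace1 2 X = proj_minus"
  shows "minus_plus_weight X = 0"
proof -
  define w0 where "w0 = (\<lambda>i::nat. if i = 0 then 1 else if i = 1 then 1 else (0::complex))"
  define w1 where "w1 = (\<lambda>i::nat. if i = 2 then 1 else if i = 3 then 1 else (0::complex))"
  have "(\<Sum>i<4. \<Sum>j<4. cnj (w0 i) * X $$ (i, j) * w0 j) + (\<Sum>i<4. \<Sum>j<4. cnj (w1 i) * X $$ (i, j) * w1 j)
     = ptrace1 2 X $$ (0, 0) + ptrace1 2 X $$ (0, 1) + ptrace1 2 X $$ (1, 0) + ptrace1 2 X $$ (1, 1)"
    by (simp add: sum_lessThan_4 w0_def w1_def index_ptrace1_2)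
  also have "\<dots> = 0" using tr1 by (simp add: proj_defs)
  finally have "(\<Sum>i<4. \<Sum>j<4. cnj (w0 i) * X $$ (i, j) * w0 j) = 0"
      and "(\<Sum>i<4. \<Sum>j<4. cnj (w1 i) * X $$ (i, j) * w1 j) = 0"
    using psd_quad_form_sum_nonneg[OF ps, of w0] psd_quad_form_sum_nonneg[OF ps, of w1]
    by (simp_all add: add_nonneg_eq_0_iff)
  from this[THEN psd_null_vector_entries(1)[OF ps]]
  have "X $$ (k, 0) = - X $$ (k, 1)" "X $$ (k, 2) = - X $$ (k, 3)" if "k < 4" for k
    using that by (simp_all add: sum_lessThan_4 w0_def w1_def eq_neg_iff_add_eq_0)
  from this[of 0] this[of 1] this[of 2] this[of 3] show ?thesis
    unfolding minus_plus_weight_expand by simp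
qed

lemma completely_positive_imp_psd:
  assumes cp: "completely_positive d d' \<Lambda>" and \<Lambda>: "\<Lambda> \<rho> \<in> carrier_mat d' d'" and \<rho>: "psd d \<rho>"
  shows "psd d' (\<Lambda> \<rho>)"
proof -
  have "\<forall>X. psd (1 * d) X \<longrightarrow> psd (1 * d') (id_tensor 1 d d' \<Lambda> X)"
    using cp unfolding completely_positive_def by blast
  then have "psd d' (id_tensor 1 d d' \<Lambda> \<rho>)" using \<rho> by simp
  moreover have "mat d d (\<lambda>(a, b). \<rho> $$ (a, b)) = \<rho>"
    using psd_carrier[OF \<rho>] by (intro eq_matI) auto
  then have "id_tensor 1 d d' \<Lambda> \<rho> = \<Lambda> \<rho>"
    unfolding id_tensor_def using \<Lambda> by (intro eq_matI) auto
  ultimately show ?thesis by simp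
qed

lemma no_qubit_broadcasting:
  assumes lin: "lin_map 2 4 \<Lambda>"
    and broadcast: "\<And>\<rho>. \<rho> \<in> states 2 \<Longrightarrow> psd 4 (\<Lambda> \<rho>) \<and> ptrace2 2 (\<Lambda> \<rho>) = \<rho> \<and> ptrace1 2 (\<Lambda> \<rho>) = \<rho>"
  shows False
proof -
  note ps = broadcast[THEN conjunct1] and tr2 = broadcast[THEN conjunct2, THEN conjunct1]
    and tr1 = broadcast[THEN conjunct2, THEN conjunct2]
  have "\<Lambda> proj0 + \<Lambda> proj1 = \<Lambda> proj_plus + \<Lambda> proj_minus"
    using lin proj_carrier proj0_add_proj1 unfolding lin_map_def by metis
  then have "minus_plus_weight (\<Lambda> proj0) + minus_plus_weight (\<Lambda> proj1) =
      minus_plus_weight (\<Lambda> proj_plus) + minus_plus_weight (\<Lambda> proj_minus)"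
    using minus_plus_weight_add psd_carrier ps proj_states by metis
  moreover have "minus_plus_weight (\<Lambda> proj0) = 1" "minus_plus_weight (\<Lambda> proj1) = 1"
    using minus_plus_weight_proj0_broadcast minus_plus_weight_proj1_broadcast ps tr1 tr2 proj_states
    by blast+
  moreover have "minus_plus_weight (\<Lambda> proj_plus) = 0" "minus_plus_weight (\<Lambda> proj_minus) = 0"
    using minus_plus_weight_plus_first_marginal minus_plus_weight_minus_second_marginal ps tr1 tr2 proj_states
    by blast+
  ultimately show False by simp
qed

lemma sic_not_broadcastable: "\<not> broadcastable 2 (states 2) {[sic_E 1, sic_E 2, sic_E 3, sic_E 4]}"
proof
  define Es where "Es = [sic_E 1, sic_E 2, sic_E 3, sic_E 4]"
  assume "broadcastable 2 (states 2) {[sic_E 1, sic_E 2, sic_E 3, sic_E 4]}"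
  then obtain \<Lambda> where cptp: "cptp 2 (2 * 2) \<Lambda>"
    and stats: "\<And>\<rho> k. \<rho> \<in> states 2 \<Longrightarrow> k < length Es \<Longrightarrow>
      mtrace (Es ! k * ptrace2 2 (\<Lambda> \<rho>)) = mtrace (Es ! k * \<rho>) \<and>
      mtrace (Es ! k * ptrace1 2 (\<Lambda> \<rho>)) = mtrace (Es ! k * \<rho>)"
    unfolding broadcastable_def Es_def[symmetric] by blast
  have lin: "lin_map 2 4 \<Lambda>" and cp: "completely_positive 2 4 \<Lambda>" using cptp by (auto simp: cptp_def)
  have Es_nth: "j - 1 < length Es" "Es ! (j - 1) = sic_E j" if "j \<in> {1..4}" for j
    using that unfolding atLeastAtMost_1_4 Es_def by auto
  have "psd 4 (\<Lambda> \<rho>) \<and> ptrace2 2 (\<Lambda> \<rho>) = \<rho> \<and> ptrace1 2 (\<Lambda> \<rho>) = \<rho>" if \<rho>: "\<rho> \<in> states 2" for \<rho>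
  proof (intro conjI)
    show "psd 4 (\<Lambda> \<rho>)"
      using completely_positive_imp_psd[OF cp] lin state_psd[OF \<rho>] state_carrier[OF \<rho>]
      unfolding lin_map_def by blast
    show "ptrace2 2 (\<Lambda> \<rho>) = \<rho>" "ptrace1 2 (\<Lambda> \<rho>) = \<rho>"
      using sic_statistics_determine_mat[OF _ state_carrier[OF \<rho>]] stats[OF \<rho> Es_nth(1)] Es_nth(2)
      by (simp_all add: ptrace2_def ptrace1_def)
  qed
  with lin show False by (rule no_qubit_broadcasting)
qed

theorem mainTheorem8:
  shows "\<not> broadcastable 2 (states 2) {[sic_E 1, sic_E 2, sic_E 3, sic_E 4]}
    \<and> (\<forall>n::nat.
         lin_map 2 (2 ^ n) (Xi n) \<and> trace_preserving 2 (Xi n)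
       \<and> (\<forall>is. length is = n \<longrightarrow> set is \<subseteq> {1..4} \<longrightarrow>
            (\<forall>\<rho> \<in> states 2. 0 \<le> mtrace (kron_list (map sic_E is) * Xi n \<rho>)))
       \<and> (\<forall>j \<in> {1..4}. \<forall>k \<in> {1..n}. \<forall>\<rho> \<in> states 2.
            mtrace (sic_E j * ptrace_keep n k (Xi n \<rho>)) = mtrace (sic_E j * \<rho>)))"
  using sic_not_broadcastable lin_map_Xi trace_preserving_Xi
    mtrace_kron_sic_E_mult_Xi_nonneg[OF _ _ state_psd] mtrace_sic_E_ptrace_keep_Xi
  by auto

end
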